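(* For each $\otimes\in\{\mathrm{del},\mathrm{add},\mathrm{edit}\}$, every problem $\textsc{RM}^{\otimes}_{\mathrm{arb}}(\phi)$ with $\phi$ of the form $\exists x_1\cdots\exists x_c\forall y\,\psi$ ($c\ge 0$, $\psi$ quantifier-free) lies in $\mathrm{TC}^0$; i.e. $\textsc{RM}^{\otimes}_{\mathrm{arb}}(e^*a)\subseteq\mathrm{TC}^0$.
   Context: A relational vocabulary $\tau=\{R_1,\dots,R_r\}$ assigns arity $a_i$ to $R_i$; a finite $\tau$-structure $\mathcal A=(A,R_1^{\mathcal A},\dots,R_r^{\mathcal A})$ has $R_i^{\mathcal A}\subseteq A^{a_i}$ (ordered). A modulator is $S=(S_1,\dots,S_r)$, $S_i\subseteq A^{a_i}$; deletion modulator if $S_i\subseteq R_i^{\mathcal A}$, addition modulator if $S_i\cap R_i^{\mathcal A}=\emptyset$; $\mathcal A\triangleright S=(A,R_1^{\mathcal A}\triangle S_1,\dots,R_r^{\mathcal A}\triangle S_r)$, $\|S\|=\sum_i|S_i|$. $\textsc{RM}^{\mathrm{edit}}_{\mathrm{arb}}(\phi)$: given $\mathcal A$ and $k\in\mathbb N$, is there a modulator $S$ with $\|S\|\le k$ and $\mathcal A\triangleright S\models\phi$; del/add versions require a deletion/addition modulator. $\mathrm{TC}^0$ is the class of problems decided by constant-depth polynomial-size unbounded fan-in circuits with and/or/not and threshold gates. *)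

theory Defs
  imports Main
begin

text \<open>A vocabulary is a list of arities ar (relation symbol i has arity ar!i, i < length ar).
A finite structure with universe {0..<n} is a function R mapping i to a set of tuples
(lists of length ar!i over {0..<n}).\<close>

definition tuples :: "nat \<Rightarrow> nat \<Rightarrow> nat list set" where
  "tuples n a = {t. length t = a \<and> set t \<subseteq> {0..<n}}"

definition is_rel_family :: "nat list \<Rightarrow> nat \<Rightarrow> (nat \<Rightarrow> nat list set) \<Rightarrow> bool" where
  "is_rel_family ar n R \<longleftrightarrow> (\<forall>i < length ar. R i \<subseteq> tuples n (ar ! i))"

text \<open>Modulators are relation families as well; norm = sum of cardinalities.\<close>
definition mod_norm :: "nat list \<Rightarrow> (nat \<Rightarrow> nat list set) \<Rightarrow> nat" where
  "mod_norm ar S = (\<Sum>i<length ar. card (S i))"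

definition apply_mod :: "(nat \<Rightarrow> nat list set) \<Rightarrow> (nat \<Rightarrow> nat list set) \<Rightarrow> (nat \<Rightarrow> nat list set)" where
  "apply_mod R S = (\<lambda>i. (R i - S i) \<union> (S i - R i))"

datatype mode = Del | Add | Edit

definition mode_ok :: "mode \<Rightarrow> nat list \<Rightarrow> (nat \<Rightarrow> nat list set) \<Rightarrow> (nat \<Rightarrow> nat list set) \<Rightarrow> bool" where
  "mode_ok m ar R S = (case m of
      Del \<Rightarrow> (\<forall>i < length ar. S i \<subseteq> R i)
    | Add \<Rightarrow> (\<forall>i < length ar. S i \<inter> R i = {})
    | Edit \<Rightarrow> True)"

datatype qf = Atom nat "nat list" | Eq nat nat | Neg qf | Conj qf qf | Disj qf qf

fun qf_sem :: "(nat \<Rightarrow> nat list set) \<Rightarrow> (nat \<Rightarrow> nat) \<Rightarrow> qf \<Rightarrow> bool" where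
  "qf_sem R v (Atom i xs) = (map v xs \<in> R i)"
| "qf_sem R v (Eq x y) = (v x = v y)"
| "qf_sem R v (Neg f) = (\<not> qf_sem R v f)"
| "qf_sem R v (Conj f g) = (qf_sem R v f \<and> qf_sem R v g)"
| "qf_sem R v (Disj f g) = (qf_sem R v f \<or> qf_sem R v g)"

text \<open>psi is well formed for the sentence  Ex x_0 ... Ex x_(c-1) All y. psi  with y = variable c:
all variables are at most c and atoms respect the vocabulary.\<close>
fun qf_wf :: "nat list \<Rightarrow> nat \<Rightarrow> qf \<Rightarrow> bool" where
  "qf_wf ar c (Atom i xs) = (i < length ar \<and> length xs = ar ! i \<and> (\<forall>x\<in>set xs. x \<le> c))"
| "qf_wf ar c (Eq x y) = (x \<le> c \<and> y \<le> c)"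
| "qf_wf ar c (Neg f) = qf_wf ar c f"
| "qf_wf ar c (Conj f g) = (qf_wf ar c f \<and> qf_wf ar c g)"
| "qf_wf ar c (Disj f g) = (qf_wf ar c f \<and> qf_wf ar c g)"

definition sat_EA :: "nat \<Rightarrow> (nat \<Rightarrow> nat list set) \<Rightarrow> nat \<Rightarrow> qf \<Rightarrow> bool" where
  "sat_EA n R c psi \<longleftrightarrow>
     (\<exists>xs. length xs = c \<and> set xs \<subseteq> {0..<n} \<and>
        (\<forall>y < n. qf_sem R (\<lambda>j. (xs @ [y]) ! j) psi))"

definition RM :: "mode \<Rightarrow> nat list \<Rightarrow> nat \<Rightarrow> qf \<Rightarrow> nat \<Rightarrow> (nat \<Rightarrow> nat list set) \<Rightarrow> nat \<Rightarrow> bool" where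
  "RM m ar c psi n R k \<longleftrightarrow>
     (\<exists>S. is_rel_family ar n S \<and> mode_ok m ar R S \<and> mod_norm ar S \<le> k \<and>
          sat_EA n (apply_mod R S) c psi)"

fun tuple_list :: "nat \<Rightarrow> nat \<Rightarrow> nat list list" where
  "tuple_list n 0 = [[]]"
| "tuple_list n (Suc a) = concat (map (\<lambda>x. map (\<lambda>t. x # t) (tuple_list n a)) [0..<n])"

definition rel_bits :: "nat list \<Rightarrow> nat \<Rightarrow> (nat \<Rightarrow> nat list set) \<Rightarrow> bool list" where
  "rel_bits ar n R = concat (map (\<lambda>i. map (\<lambda>t. t \<in> R i) (tuple_list n (ar ! i))) [0..<length ar])"

definition bits_val :: "bool list \<Rightarrow> nat" where
  "bits_val bs = (\<Sum>i<length bs. if bs ! i then 2 ^ i else 0)"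

text \<open>Instance (A,k): n in unary, a separator, the characteristic bit vectors of the relations
(lexicographic tuple order), then k in binary (least significant bit first).\<close>
definition RM_lang :: "mode \<Rightarrow> nat list \<Rightarrow> nat \<Rightarrow> qf \<Rightarrow> bool list set" where
  "RM_lang m ar c psi = {w. \<exists>n R kb. 0 < n \<and> is_rel_family ar n R \<and>
      w = replicate n True @ [False] @ rel_bits ar n R @ kb \<and> RM m ar c psi n R (bits_val kb)}"

text \<open>A circuit is a list of gates; gate j may only refer to gates with index < j.
The output is the last gate.\<close>
datatype gate = GIn nat | GConst bool | GNot nat | GAnd "nat list" | GOr "nat list"
  | GThr nat "nat list"

fun gate_val :: "bool list \<Rightarrow> bool list \<Rightarrow> gate \<Rightarrow> bool" where
  "gate_val w vs (GIn i) = w ! i"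
| "gate_val w vs (GConst b) = b"
| "gate_val w vs (GNot j) = (\<not> vs ! j)"
| "gate_val w vs (GAnd js) = (\<forall>j\<in>set js. vs ! j)"
| "gate_val w vs (GOr js) = (\<exists>j\<in>set js. vs ! j)"
| "gate_val w vs (GThr t js) = (t \<le> length (filter (\<lambda>j. vs ! j) js))"

fun gate_depth :: "nat list \<Rightarrow> gate \<Rightarrow> nat" where
  "gate_depth ds (GIn i) = 0"
| "gate_depth ds (GConst b) = 0"
| "gate_depth ds (GNot j) = Suc (ds ! j)"
| "gate_depth ds (GAnd js) = Suc (foldr max (map (\<lambda>j. ds ! j) js) 0)"
| "gate_depth ds (GOr js) = Suc (foldr max (map (\<lambda>j. ds ! j) js) 0)"
| "gate_depth ds (GThr t js) = Suc (foldr max (map (\<lambda>j. ds ! j) js) 0)"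

fun gate_wf :: "nat \<Rightarrow> nat \<Rightarrow> gate \<Rightarrow> bool" where
  "gate_wf m p (GIn i) = (i < m)"
| "gate_wf m p (GConst b) = True"
| "gate_wf m p (GNot j) = (j < p)"
| "gate_wf m p (GAnd js) = (\<forall>j\<in>set js. j < p)"
| "gate_wf m p (GOr js) = (\<forall>j\<in>set js. j < p)"
| "gate_wf m p (GThr t js) = (\<forall>j\<in>set js. j < p)"

definition circ_wf :: "nat \<Rightarrow> gate list \<Rightarrow> bool" where
  "circ_wf m gs \<longleftrightarrow> gs \<noteq> [] \<and> (\<forall>p < length gs. gate_wf m p (gs ! p))"

definition circ_vals :: "bool list \<Rightarrow> gate list \<Rightarrow> bool list" where
  "circ_vals w gs = foldl (\<lambda>vs g. vs @ [gate_val w vs g]) [] gs"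

definition circ_out :: "bool list \<Rightarrow> gate list \<Rightarrow> bool" where
  "circ_out w gs = last (circ_vals w gs)"

definition circ_depth :: "gate list \<Rightarrow> nat" where
  "circ_depth gs = foldr max (foldl (\<lambda>ds g. ds @ [gate_depth ds g]) [] gs) 0"

definition TC0 :: "bool list set \<Rightarrow> bool" where
  "TC0 L \<longleftrightarrow> (\<exists>d e. \<exists>C :: nat \<Rightarrow> gate list. \<forall>m.
      circ_wf m (C m) \<and> length (C m) \<le> m ^ e + e \<and> circ_depth (C m) \<le> d \<and>
      (\<forall>w. length w = m \<longrightarrow> (circ_out w (C m) \<longleftrightarrow> w \<in> L)))"

end

theory Submission
  imports Defs
begin

text \<open>
  Fix the witnesses \<open>xs\<close> for the existential block.  Whether \<open>\<psi>(xs, y)\<close> holds only depends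
  on the tuples over \<open>xs\<close> and \<open>y\<close>, and the tuples that mention \<open>y\<close> are disjoint for different
  \<open>y\<close>.  So a modulator splits into a part \<open>Sp\<close> over \<open>xs\<close>, of constant size, and for every other
  \<open>y\<close> an independent repair by tuples mentioning \<open>y\<close>, whose minimal cost depends on constantly
  many input bits only.  An instance is therefore accepted iff for some of the polynomially many
  choices of \<open>xs\<close> and \<open>Sp\<close> all local conditions hold and \<open>|Sp| + \<Sum>\<^sub>y cost\<^sub>y \<le> k\<close>: a disjunction of
  constant-size DNFs and a single threshold gate comparing with the binary number \<open>k\<close>.
  Threshold formulas of constant depth and polynomial size compile into \<open>TC\<^sup>0\<close> circuits.
\<close>

section \<open>Threshold formulas and their compilation into circuits\<close>

datatype tform = TIn nat | TNot tform | TThr nat "(nat \<times> tform) list"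

definition input_bit :: "bool list \<Rightarrow> nat \<Rightarrow> bool" where
  "input_bit w p \<longleftrightarrow> p < length w \<and> w ! p"

fun teval :: "bool list \<Rightarrow> tform \<Rightarrow> bool" where
  "teval w (TIn p) = input_bit w p"
| "teval w (TNot f) = (\<not> teval w f)"
| "teval w (TThr t ps) = (t \<le> sum_list (map (\<lambda>p. if teval w (snd p) then fst p else 0) ps))"

fun tsize :: "tform \<Rightarrow> nat" where
  "tsize (TIn p) = 1"
| "tsize (TNot f) = Suc (tsize f)"
| "tsize (TThr t ps) = Suc (sum_list (map (\<lambda>p. tsize (snd p)) ps))"

fun tdepth :: "tform \<Rightarrow> nat" where
  "tdepth (TIn p) = 0"
| "tdepth (TNot f) = Suc (tdepth f)"
| "tdepth (TThr t ps) = Suc (foldr max (map (\<lambda>p. tdepth (snd p)) ps) 0)"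

lemma tsize_pos: "0 < tsize f"
  by (cases f) auto

abbreviation tsizes :: "(nat \<times> tform) list \<Rightarrow> nat" where
  "tsizes ps \<equiv> sum_list (map (\<lambda>p. tsize (snd p)) ps)"

lemma foldr_max_le_iff: "foldr max xs (0::nat) \<le> d \<longleftrightarrow> (\<forall>x\<in>set xs. x \<le> d)"
  by (induction xs) auto

text \<open>
  The formula compiled at offset \<open>b\<close> occupies the gates \<open>b ..< b + tsize f\<close>, the last one being its
  output.  A weight \<open>k\<close> is realised by reading a wire \<open>k\<close> times: the size of a circuit counts
  gates, not wires.
\<close>

fun wires :: "nat \<Rightarrow> (nat \<times> tform) list \<Rightarrow> nat list" where
  "wires b [] = []"
| "wires b ((k, f) # ps) = replicate k (b + tsize f - 1) @ wires (b + tsize f) ps"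

fun compile :: "nat \<Rightarrow> nat \<Rightarrow> tform \<Rightarrow> gate list"
and compile_list :: "nat \<Rightarrow> nat \<Rightarrow> (nat \<times> tform) list \<Rightarrow> gate list" where
  "compile m b (TIn p) = [if p < m then GIn p else GConst False]"
| "compile m b (TNot f) = compile m b f @ [GNot (b + tsize f - 1)]"
| "compile m b (TThr t ps) = compile_list m b ps @ [GThr t (wires b ps)]"
| "compile_list m b [] = []"
| "compile_list m b ((k, f) # ps) = compile m b f @ compile_list m (b + tsize f) ps"

lemma length_compile:
  "length (compile m b f) = tsize f"
  "length (compile_list m b ps) = tsizes ps"
  by (induction m b f and m b ps rule: compile_compile_list.induct) auto

lemma wires_range: "j \<in> set (wires b ps) \<Longrightarrow> b \<le> j \<and> j < b + tsizes ps"
proof (induction b ps rule: wires.induct)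
  case (2 b k f ps)
  then show ?case using tsize_pos[of f] by (auto split: if_splits)
qed simp

definition gate_scan :: "('a list \<Rightarrow> gate \<Rightarrow> 'a) \<Rightarrow> 'a list \<Rightarrow> gate list \<Rightarrow> 'a list" where
  "gate_scan h xs gs = foldl (\<lambda>vs g. vs @ [h vs g]) xs gs"

lemma gate_scan_simps [simp]:
  "gate_scan h xs [] = xs"
  "gate_scan h xs (gs @ gs') = gate_scan h (gate_scan h xs gs) gs'"
  "gate_scan h xs [g] = xs @ [h xs g]"
  by (simp_all add: gate_scan_def)

lemma gate_scan_prefix: "take (length xs) (gate_scan h xs gs) = xs"
  and length_gate_scan: "length (gate_scan h xs gs) = length xs + length gs"
  by (induction gs arbitrary: xs rule: rev_induct) (simp_all add: gate_scan_def)

lemma nth_gate_scan: "i < length xs \<Longrightarrow> gate_scan h xs gs ! i = xs ! i"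
  by (metis gate_scan_prefix nth_take)

lemma compile_correct:
  "length w = m \<Longrightarrow> length vs = b \<Longrightarrow>
     gate_scan (gate_val w) vs (compile m b f) ! (b + tsize f - 1) = teval w f"
  "length w = m \<Longrightarrow> length vs = b \<Longrightarrow>
     length (filter (\<lambda>j. gate_scan (gate_val w) vs (compile_list m b ps) ! j) (wires b ps)) =
     sum_list (map (\<lambda>p. if teval w (snd p) then fst p else 0) ps)"
proof (induction m b f and m b ps arbitrary: vs and vs rule: compile_compile_list.induct)
  case (1 m b p)
  then show ?case by (simp add: input_bit_def nth_append)
next
  case (2 m b f)
  then show ?case using tsize_pos[of f] by (simp add: nth_append length_gate_scan length_compile)
next
  case (3 m b t ps)
  then show ?case by (simp add: nth_append length_gate_scan length_compile)
next
  case (4 m b)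
  then show ?case by simp
next
  case (5 m b k f ps)
  let ?vs = "gate_scan (gate_val w) vs (compile m b f)"
  have "length ?vs = b + tsize f"
    using 5 by (simp add: length_gate_scan length_compile)
  moreover have "gate_scan (gate_val w) ?vs (compile_list m (b + tsize f) ps) ! (b + tsize f - 1) = teval w f"
    using 5 tsize_pos[of f] by (simp add: nth_gate_scan length_gate_scan length_compile)
  ultimately show ?case using 5 by (simp add: filter_replicate)
qed

definition gates_wf :: "nat \<Rightarrow> nat \<Rightarrow> gate list \<Rightarrow> bool" where
  "gates_wf m b gs \<longleftrightarrow> (\<forall>q < length gs. gate_wf m (b + q) (gs ! q))"

lemma gates_wf_append:
  "gates_wf m b (gs @ gs') \<longleftrightarrow> gates_wf m b gs \<and> gates_wf m (b + length gs) gs'"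
  (is "?lhs \<longleftrightarrow> ?rhs")
proof
  assume l: ?lhs
  show ?rhs unfolding gates_wf_def
  proof (intro conjI allI impI)
    fix q assume "q < length gs"
    then show "gate_wf m (b + q) (gs ! q)"
      using l unfolding gates_wf_def by (metis length_append nth_append trans_less_add1)
  next
    fix q assume "q < length gs'"
    then show "gate_wf m (b + length gs + q) (gs' ! q)"
      using l[unfolded gates_wf_def, rule_format, of "length gs + q"] by (simp add: add.assoc)
  qed
next
  assume r: ?rhs
  show ?lhs unfolding gates_wf_def
  proof (intro allI impI)
    fix q assume q: "q < length (gs @ gs')"
    show "gate_wf m (b + q) ((gs @ gs') ! q)"
    proof (cases "q < length gs")
      case True
      then show ?thesis using r by (simp add: gates_wf_def nth_append)
    next
      case False
      then show ?thesis
        using q r[unfolded gates_wf_def] by (auto simp: nth_append dest!: spec[where x = "q - length gs"])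
    qed
  qed
qed

lemma compile_wf:
  "gates_wf m b (compile m b f)"
  "gates_wf m b (compile_list m b ps)"
proof (induction m b f and m b ps rule: compile_compile_list.induct)
  case (2 m b f)
  then show ?case using tsize_pos[of f]
    by (simp add: gates_wf_append length_compile) (simp add: gates_wf_def)
next
  case (3 m b t ps)
  then show ?case using wires_range[of _ b ps]
    by (simp add: gates_wf_append length_compile) (auto simp: gates_wf_def)
next
  case (5 m b k f ps)
  then show ?case by (simp add: gates_wf_append length_compile)
qed (simp_all add: gates_wf_def)

lemma compile_depth:
  "length ds = b \<Longrightarrow> tdepth f \<le> d \<Longrightarrow> b \<le> i \<Longrightarrow> i < b + tsize f \<Longrightarrow>
     gate_scan gate_depth ds (compile m b f) ! i \<le> d"
  "length ds = b \<Longrightarrow> \<forall>p \<in> set ps. tdepth (snd p) \<le> d \<Longrightarrow> b \<le> i \<Longrightarrow> i < b + tsizes ps \<Longrightarrow>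
     gate_scan gate_depth ds (compile_list m b ps) ! i \<le> d"
proof (induction m b f and m b ps arbitrary: ds d i and ds d i rule: compile_compile_list.induct)
  case (2 m b f)
  then have "gate_scan gate_depth ds (compile m b f) ! (b + tsize f - 1) \<le> d - 1"
    using tsize_pos[of f] by simp
  then show ?case using 2
    by (cases "i < b + tsize f") (auto simp: nth_append length_gate_scan length_compile)
next
  case (3 m b t ps)
  then obtain d' where d: "d = Suc d'" "\<forall>p \<in> set ps. tdepth (snd p) \<le> d'"
    by (cases d) (auto simp: foldr_max_le_iff)
  let ?ds = "gate_scan gate_depth ds (compile_list m b ps)"
  have inner: "?ds ! j \<le> d'" if "b \<le> j" "j < b + tsizes ps" for j
    using 3 d that by blast
  have "length ?ds = b + tsizes ps"
    using 3 by (simp add: length_gate_scan length_compile)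
  moreover have "foldr max (map ((!) ?ds) (wires b ps)) 0 \<le> d'"
    using inner wires_range by (auto simp: foldr_max_le_iff)
  ultimately show ?case
  proof (cases "i < b + tsizes ps")
    case True
    have "gate_scan gate_depth ds (compile m b (TThr t ps)) ! i = ?ds ! i"
      using True 3 by (simp add: nth_append length_gate_scan length_compile)
    moreover have "?ds ! i \<le> d'" using True 3 by (intro inner) simp_all
    ultimately show ?thesis using d by simp
  qed (use 3 d in \<open>auto simp: nth_append\<close>)
next
  case (5 m b k f ps)
  let ?ds = "gate_scan gate_depth ds (compile m b f)"
  have "length ?ds = b + tsize f"
    using 5 by (simp add: length_gate_scan length_compile)
  then show ?case using 5
    by (cases "i < b + tsize f") (auto simp: nth_gate_scan)
qed (auto simp: nth_append)

lemma poly_le_power_plus: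
  fixes K m p :: nat
  defines "e \<equiv> K * 2 ^ p + p"
  shows "K * (m + 1) ^ p \<le> m ^ e + e"
proof (cases "m \<le> 1")
  case True
  have "K * (m + 1) ^ p \<le> K * 2 ^ p" using True by (intro mult_left_mono power_mono) auto
  then show ?thesis unfolding e_def by linarith
next
  case False
  have "K * (m + 1) ^ p \<le> K * (2 * m) ^ p" using False by (intro mult_left_mono power_mono) auto
  also have "\<dots> = K * 2 ^ p * m ^ p" by (simp add: power_mult_distrib)
  also have "K * 2 ^ p \<le> m ^ (K * 2 ^ p)"
    using less_exp[of "K * 2 ^ p"] power_mono[of 2 m "K * 2 ^ p"] False by linarith
  then have "K * 2 ^ p * m ^ p \<le> m ^ e"
    unfolding e_def power_add by (rule mult_right_mono) simp
  finally show ?thesis by simp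
qed

lemma TC0_if_threshold_formulas:
  fixes F :: "nat \<Rightarrow> tform"
  assumes correct: "\<And>w. teval w (F (length w)) \<longleftrightarrow> w \<in> L"
    and size: "\<And>m. tsize (F m) \<le> K * (m + 1) ^ p"
    and depth: "\<And>m. tdepth (F m) \<le> d"
  shows "TC0 L"
  unfolding TC0_def
proof (intro exI allI conjI)
  fix m
  let ?C = "compile m 0 (F m)"
  show "circ_wf m ?C"
    using compile_wf(1)[of m 0 "F m"] tsize_pos[of "F m"] length_compile(1)[of m 0 "F m"]
    by (auto simp: circ_wf_def gates_wf_def)
  show "length ?C \<le> m ^ (K * 2 ^ p + p) + (K * 2 ^ p + p)"
    using size[of m] poly_le_power_plus[of K m p] by (simp add: length_compile)
  have "x \<le> d" if x: "x \<in> set (gate_scan gate_depth [] ?C)" for x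
  proof -
    have "length (gate_scan gate_depth [] ?C) = tsize (F m)"
      by (simp add: length_gate_scan length_compile)
    then obtain i where "i < tsize (F m)" "x = gate_scan gate_depth [] ?C ! i"
      using x by (auto simp: in_set_conv_nth)
    then show "x \<le> d" using compile_depth(1)[of "[]" 0 "F m" d i m] depth[of m] by simp
  qed
  then show "circ_depth ?C \<le> d"
    by (simp add: circ_depth_def gate_scan_def[symmetric] foldr_max_le_iff)
  show "length w = m \<longrightarrow> circ_out w ?C = (w \<in> L)" for w
  proof
    assume w: "length w = m"
    have "circ_vals w ?C = gate_scan (gate_val w) [] ?C"
      by (simp add: circ_vals_def gate_scan_def)
    moreover have "length (gate_scan (gate_val w) [] ?C) = tsize (F m)"
      by (simp add: length_gate_scan length_compile)
    ultimately have "circ_out w ?C = gate_scan (gate_val w) [] ?C ! (tsize (F m) - 1)"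
      using tsize_pos[of "F m"] unfolding circ_out_def by (subst last_conv_nth) auto
    then show "circ_out w ?C = (w \<in> L)"
      using compile_correct(1)[of w m "[]" 0 "F m"] correct[of w] w by simp
  qed
qed

definition TAnd :: "tform list \<Rightarrow> tform" where
  "TAnd fs = TThr (length fs) (map (Pair 1) fs)"

definition TOr :: "tform list \<Rightarrow> tform" where
  "TOr fs = TThr 1 (map (Pair 1) fs)"

lemma sum_unit_weights:
  "sum_list (map (\<lambda>p. if teval w (snd p) then fst p else 0) (map (Pair 1) fs)) = length (filter (teval w) fs)"
  by (induction fs) auto

lemma teval_TAnd [simp]: "teval w (TAnd fs) \<longleftrightarrow> (\<forall>f\<in>set fs. teval w f)"
  unfolding TAnd_def teval.simps sum_unit_weights
  by (metis filter_True length_filter_le length_filter_less le_antisym not_le)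

lemma teval_TOr [simp]: "teval w (TOr fs) \<longleftrightarrow> (\<exists>f\<in>set fs. teval w f)"
  unfolding TOr_def teval.simps sum_unit_weights
  by (metis filter_empty_conv length_greater_0_conv less_eq_Suc_le One_nat_def)

lemma tsize_TThr_le:
  "\<forall>p\<in>set ps. tsize (snd p) \<le> B \<Longrightarrow> tsize (TThr t ps) \<le> Suc (length ps * B)"
  using sum_list_mono[of ps "\<lambda>p. tsize (snd p)" "\<lambda>_. B"] by (simp add: sum_list_triv)

lemma tsize_TAnd_le: "\<forall>f\<in>set fs. tsize f \<le> B \<Longrightarrow> tsize (TAnd fs) \<le> Suc (length fs * B)"
  and tsize_TOr_le: "\<forall>f\<in>set fs. tsize f \<le> B \<Longrightarrow> tsize (TOr fs) \<le> Suc (length fs * B)"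
  unfolding TAnd_def TOr_def using tsize_TThr_le[of "map (Pair 1) fs" B] by auto

lemma tdepth_TThr_le: "\<forall>p\<in>set ps. tdepth (snd p) \<le> d \<Longrightarrow> tdepth (TThr t ps) \<le> Suc d"
  by (simp add: foldr_max_le_iff)

lemma tdepth_TAnd_le: "\<forall>f\<in>set fs. tdepth f \<le> d \<Longrightarrow> tdepth (TAnd fs) \<le> Suc d"
  and tdepth_TOr_le: "\<forall>f\<in>set fs. tdepth f \<le> d \<Longrightarrow> tdepth (TOr fs) \<le> Suc d"
  unfolding TAnd_def TOr_def by (rule tdepth_TThr_le; simp)+

lemma tsize_TThr_poly:
  assumes "\<forall>p\<in>set ps. tsize (snd p) \<le> b * N ^ j" and "length ps \<le> a * N ^ i" and "0 < N"
  shows "tsize (TThr t ps) \<le> (a * b + 1) * N ^ (i + j)"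
proof -
  have "tsize (TThr t ps) \<le> Suc (a * N ^ i * (b * N ^ j))"
    using tsize_TThr_le[OF assms(1)] assms(2) by (meson Suc_le_mono le_trans mult_le_mono1)
  also have "\<dots> = Suc (a * b * N ^ (i + j))"
    by (simp add: power_add algebra_simps)
  also have "\<dots> \<le> (a * b + 1) * N ^ (i + j)"
    using assms(3) by (simp add: algebra_simps Suc_le_eq)
  finally show ?thesis .
qed

lemma tsize_TAnd_poly:
  "\<forall>f\<in>set fs. tsize f \<le> b * N ^ j \<Longrightarrow> length fs \<le> a * N ^ i \<Longrightarrow> 0 < N \<Longrightarrow>
     tsize (TAnd fs) \<le> (a * b + 1) * N ^ (i + j)"
  and tsize_TOr_poly:
  "\<forall>f\<in>set fs. tsize f \<le> b * N ^ j \<Longrightarrow> length fs \<le> a * N ^ i \<Longrightarrow> 0 < N \<Longrightarrow>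
     tsize (TOr fs) \<le> (a * b + 1) * N ^ (i + j)"
  unfolding TAnd_def TOr_def by (rule tsize_TThr_poly; simp)+

definition literal :: "nat \<Rightarrow> bool \<Rightarrow> tform" where
  "literal p b = (if b then TIn p else TNot (TIn p))"

definition minterm :: "nat list \<Rightarrow> bool list \<Rightarrow> tform" where
  "minterm P bs = TAnd (map2 literal P bs)"

definition dnf :: "nat list \<Rightarrow> (bool list \<Rightarrow> bool) \<Rightarrow> tform" where
  "dnf P Q = TOr (map (minterm P)
     (filter (\<lambda>bs. \<exists>w. map (input_bit w) P = bs \<and> Q w) (List.n_lists (length P) [True, False])))"

definition dnf_size :: "nat \<Rightarrow> nat" where
  "dnf_size k = Suc (2 ^ k * Suc (2 * k))"

lemma teval_minterm:
  "length P = length bs \<Longrightarrow> teval w (minterm P bs) \<longleftrightarrow> map (input_bit w) P = bs"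
  unfolding minterm_def by (induction P bs rule: list_induct2) (auto simp: literal_def)

lemma dnf_correct:
  assumes "\<And>w w'. map (input_bit w) P = map (input_bit w') P \<Longrightarrow> Q w \<longleftrightarrow> Q w'"
  shows "teval w (dnf P Q) \<longleftrightarrow> Q w"
proof -
  let ?bss = "List.n_lists (length P) [True, False]"
  have "teval w (dnf P Q) \<longleftrightarrow>
      (\<exists>bs\<in>set ?bss. (\<exists>w'. map (input_bit w') P = bs \<and> Q w') \<and> teval w (minterm P bs))"
    by (auto simp: dnf_def)
  also have "\<dots> \<longleftrightarrow> (\<exists>w'. map (input_bit w') P = map (input_bit w) P \<and> Q w')"
  proof -
    have "teval w (minterm P bs) \<longleftrightarrow> map (input_bit w) P = bs" if "bs \<in> set ?bss" for bs
      using that by (simp add: teval_minterm length_n_lists_elem)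
    moreover have "map (input_bit w) P \<in> set ?bss"
      by (simp add: set_n_lists subset_iff)
    ultimately show ?thesis by metis
  qed
  also have "\<dots> \<longleftrightarrow> Q w"
    using assms by auto
  finally show ?thesis .
qed

lemma tsize_dnf: "tsize (dnf P Q) \<le> dnf_size (length P)"
proof -
  let ?bss = "filter (\<lambda>bs. \<exists>w. map (input_bit w) P = bs \<and> Q w) (List.n_lists (length P) [True, False])"
  have "tsize (minterm P bs) \<le> Suc (2 * length P)" for bs
    unfolding minterm_def
    by (rule order_trans[OF tsize_TAnd_le[of _ 2]]) (auto simp: literal_def dest: set_zip_leftD)
  then have "tsize (TOr (map (minterm P) ?bss)) \<le> Suc (length (map (minterm P) ?bss) * Suc (2 * length P))"
    by (intro tsize_TOr_le) simp
  then have "tsize (dnf P Q) \<le> Suc (length ?bss * Suc (2 * length P))"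
    unfolding dnf_def length_map .
  moreover have "length ?bss \<le> 2 ^ length P"
    using length_filter_le[of _ "List.n_lists (length P) [True, False]"]
    by (simp add: length_n_lists numeral_2_eq_2)
  ultimately show ?thesis
    unfolding dnf_size_def by (meson Suc_le_mono le_trans mult_le_mono1)
qed

lemma tdepth_dnf: "tdepth (dnf P Q) \<le> 3"
proof -
  have "\<forall>f\<in>set (map2 literal P bs). tdepth f \<le> 1" for bs
    by (auto simp: literal_def)
  then have "tdepth (minterm P bs) \<le> Suc 1" for bs
    unfolding minterm_def by (rule tdepth_TAnd_le)
  then have "tdepth (dnf P Q) \<le> Suc (Suc 1)"
    unfolding dnf_def by (intro tdepth_TOr_le) auto
  then show ?thesis by simp
qed

lemma dnf_size_mono: "k \<le> l \<Longrightarrow> dnf_size k \<le> dnf_size l"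
  unfolding dnf_size_def by (intro Suc_le_mono[THEN iffD2] mult_le_mono power_increasing) auto

section \<open>Facts and the encoding of structures\<close>

text \<open>A fact \<open>(i, t)\<close> is the tuple \<open>t\<close> of relation symbol \<open>i\<close>.\<close>

definition facts :: "nat list \<Rightarrow> nat set \<Rightarrow> (nat \<times> nat list) set" where
  "facts ar A = (SIGMA i:{..<length ar}. {t. set t \<subseteq> A \<and> length t = ar ! i})"

definition agree_on ::
  "nat list \<Rightarrow> nat set \<Rightarrow> (nat \<Rightarrow> nat list set) \<Rightarrow> (nat \<Rightarrow> nat list set) \<Rightarrow> bool"
where
  "agree_on ar A R R' \<longleftrightarrow> (\<forall>(i, t) \<in> facts ar A. t \<in> R i \<longleftrightarrow> t \<in> R' i)"

lemma mem_facts: "(i, t) \<in> facts ar A \<longleftrightarrow> i < length ar \<and> length t = ar ! i \<and> set t \<subseteq> A"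
  by (auto simp: facts_def)

lemma facts_mono: "A \<subseteq> B \<Longrightarrow> facts ar A \<subseteq> facts ar B"
  by (auto simp: facts_def)

lemma finite_facts: "finite A \<Longrightarrow> finite (facts ar A)"
  unfolding facts_def using finite_lists_length_eq by auto

lemma card_facts: "finite A \<Longrightarrow> card (facts ar A) = (\<Sum>i<length ar. card A ^ (ar ! i))"
  unfolding facts_def by (subst card_SigmaI) (simp_all add: card_lists_length_eq finite_lists_length_eq)

lemma agree_on_mono: "agree_on ar B R R' \<Longrightarrow> A \<subseteq> B \<Longrightarrow> agree_on ar A R R'"
  unfolding agree_on_def using facts_mono by blast

lemma finite_tuples: "finite (tuples n a)"
  using finite_lists_length_eq[of "{0..<n}" a] by (simp add: tuples_def conj_commute)

lemma set_snd_facts: "p \<in> facts ar A \<Longrightarrow> set (snd p) \<subseteq> A"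
  by (auto simp: facts_def)

lemma facts_insert:
  "facts ar (insert y A) = facts ar A \<union> {p \<in> facts ar (insert y A). y \<in> set (snd p)}"
  by (auto simp: facts_def)

lemma qf_sem_cong:
  "qf_wf ar c f \<Longrightarrow> (\<forall>x\<le>c. v x \<in> A) \<Longrightarrow> agree_on ar A R R' \<Longrightarrow> qf_sem R v f \<longleftrightarrow> qf_sem R' v f"
proof (induction f)
  case (Atom i xs)
  then have "(i, map v xs) \<in> facts ar A" by (auto simp: mem_facts)
  then show ?case using Atom.prems(3) by (auto simp: agree_on_def)
qed auto

lemma RM_cong:
  assumes "qf_wf ar c psi" and "\<forall>i < length ar. R i = R' i"
  shows "RM m ar c psi n R k \<longleftrightarrow> RM m ar c psi n R' k"
proof -
  have "agree_on ar UNIV (apply_mod R S) (apply_mod R' S)" for S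
    using assms(2) by (auto simp: agree_on_def facts_def apply_mod_def)
  then have "sat_EA n (apply_mod R S) c psi \<longleftrightarrow> sat_EA n (apply_mod R' S) c psi" for S
    unfolding sat_EA_def using qf_sem_cong[OF assms(1)] by blast
  moreover have "mode_ok m ar R S \<longleftrightarrow> mode_ok m ar R' S" for S
    using assms(2) by (simp add: mode_ok_def split: mode.split)
  ultimately show ?thesis unfolding RM_def by simp
qed

lemma set_tuple_list: "set (tuple_list n a) = tuples n a"
proof (induction a)
  case 0
  then show ?case by (auto simp: tuples_def)
next
  case (Suc a)
  have "tuples n (Suc a) = (\<Union>x\<in>{0..<n}. (#) x ` tuples n a)"
    by (auto simp: tuples_def length_Suc_conv)
  then show ?case using Suc by auto
qed

lemma length_tuple_list: "length (tuple_list n a) = n ^ a"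
  by (induction a) (simp_all add: length_concat comp_def sum_list_triv)

definition all_facts :: "nat list \<Rightarrow> nat \<Rightarrow> (nat \<times> nat list) list" where
  "all_facts ar n = concat (map (\<lambda>i. map (Pair i) (tuple_list n (ar ! i))) [0..<length ar])"

lemma rel_bits_conv_all_facts: "rel_bits ar n R = map (\<lambda>(i, t). t \<in> R i) (all_facts ar n)"
  by (simp add: rel_bits_def all_facts_def map_concat comp_def)

lemma set_all_facts: "set (all_facts ar n) = facts ar {0..<n}"
  by (auto simp: all_facts_def set_tuple_list facts_def tuples_def)

lemma distinct_all_facts: "distinct (all_facts ar n)"
proof (rule card_distinct)
  have "length (all_facts ar n) = (\<Sum>i<length ar. n ^ (ar ! i))"
    by (simp add: all_facts_def length_concat comp_def length_tuple_list sum_list_sum_nth lessThan_atLeast0)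
  then show "card (set (all_facts ar n)) = length (all_facts ar n)"
    by (simp add: set_all_facts card_facts)
qed

definition fact_pos :: "nat list \<Rightarrow> nat \<Rightarrow> nat \<times> nat list \<Rightarrow> nat" where
  "fact_pos ar n p = n + 1 + the_inv_into {..<length (all_facts ar n)} ((!) (all_facts ar n)) p"

definition k_start :: "nat list \<Rightarrow> nat \<Rightarrow> nat" where
  "k_start ar n = n + 1 + length (all_facts ar n)"

definition decode :: "nat list \<Rightarrow> nat \<Rightarrow> bool list \<Rightarrow> nat \<Rightarrow> nat list set" where
  "decode ar n w i = {t. (i, t) \<in> facts ar {0..<n} \<and> input_bit w (fact_pos ar n (i, t))}"

lemma fact_pos_nth: "q < length (all_facts ar n) \<Longrightarrow> fact_pos ar n (all_facts ar n ! q) = n + 1 + q"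
  unfolding fact_pos_def using distinct_all_facts
  by (simp add: the_inv_into_f_f inj_on_nth)

lemma length_rel_bits: "length (rel_bits ar n R) = length (all_facts ar n)"
  by (simp add: rel_bits_conv_all_facts)

lemma input_bit_fact_pos:
  assumes "w = replicate n True @ [False] @ rel_bits ar n R @ kb" and "(i, t) \<in> facts ar {0..<n}"
  shows "input_bit w (fact_pos ar n (i, t)) \<longleftrightarrow> t \<in> R i"
proof -
  obtain q where q: "q < length (all_facts ar n)" "all_facts ar n ! q = (i, t)"
    using assms(2) by (metis in_set_conv_nth set_all_facts)
  then have "w ! fact_pos ar n (i, t) = (t \<in> R i)"
    using assms(1) fact_pos_nth[OF q(1)]
    by (simp add: nth_append length_rel_bits rel_bits_conv_all_facts)
  moreover have "fact_pos ar n (i, t) < length w"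
    using assms(1) q fact_pos_nth[OF q(1)] by (simp add: length_rel_bits)
  ultimately show ?thesis by (simp add: input_bit_def)
qed

lemma decode_family: "is_rel_family ar n (decode ar n w)"
  by (auto simp: is_rel_family_def decode_def mem_facts tuples_def)

lemma decode_encoding:
  assumes "is_rel_family ar n R" and "i < length ar"
  shows "decode ar n (replicate n True @ [False] @ rel_bits ar n R @ kb) i = R i"
proof -
  have "R i \<subseteq> tuples n (ar ! i)" using assms by (simp add: is_rel_family_def)
  then show ?thesis
    using assms(2) input_bit_fact_pos[OF refl, where R = R and kb = kb and i = i]
    by (auto simp: decode_def mem_facts tuples_def)
qed

lemma rel_bits_decode:
  assumes "k_start ar n \<le> length w"
  shows "rel_bits ar n (decode ar n w) = take (length (all_facts ar n)) (drop (n + 1) w)"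
proof (rule nth_equalityI)
  fix q assume "q < length (rel_bits ar n (decode ar n w))"
  then have q: "q < length (all_facts ar n)" by (simp add: length_rel_bits)
  obtain i t where it: "all_facts ar n ! q = (i, t)" by fastforce
  then have "(i, t) \<in> facts ar {0..<n}" using q by (metis nth_mem set_all_facts)
  then show "rel_bits ar n (decode ar n w) ! q = take (length (all_facts ar n)) (drop (n + 1) w) ! q"
    using assms q it fact_pos_nth[OF q]
    by (simp add: rel_bits_conv_all_facts decode_def input_bit_def k_start_def)
qed (use assms in \<open>simp add: length_rel_bits k_start_def\<close>)

lemma word_eq_encoding_decode:
  assumes "k_start ar n \<le> length w" and "\<forall>j<n. input_bit w j" and "\<not> input_bit w n"
  shows "w = replicate n True @ [False] @ rel_bits ar n (decode ar n w) @ drop (k_start ar n) w"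
proof -
  have "take (n + 1) w = replicate n True @ [False]"
    using assms by (intro nth_equalityI) (auto simp: k_start_def input_bit_def nth_append less_Suc_eq)
  moreover have "drop (n + 1) w = rel_bits ar n (decode ar n w) @ drop (k_start ar n) w"
    using rel_bits_decode[OF assms(1)] append_take_drop_id[of "length (all_facts ar n)" "drop (n + 1) w"]
    by (simp add: k_start_def add.commute)
  ultimately show ?thesis by (metis append_take_drop_id append.assoc)
qed

lemma RM_lang_iff:
  assumes "qf_wf ar c psi"
  shows "w \<in> RM_lang m ar c psi \<longleftrightarrow>
    (\<exists>n. 0 < n \<and> k_start ar n \<le> length w \<and> (\<forall>j<n. input_bit w j) \<and> \<not> input_bit w n \<and>
         RM m ar c psi n (decode ar n w) (bits_val (drop (k_start ar n) w)))"
    (is "_ \<longleftrightarrow> (\<exists>n. ?enc n)")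
proof
  assume "w \<in> RM_lang m ar c psi"
  then obtain n R kb where n: "0 < n" and R: "is_rel_family ar n R"
    and w: "w = replicate n True @ [False] @ rel_bits ar n R @ kb"
    and RM: "RM m ar c psi n R (bits_val kb)"
    unfolding RM_lang_def by blast
  have "drop (k_start ar n) w = kb"
    using w by (simp add: k_start_def length_rel_bits)
  moreover have "\<forall>i < length ar. decode ar n w i = R i"
    using decode_encoding[OF R] w by simp
  then have "RM m ar c psi n (decode ar n w) (bits_val kb)"
    using RM RM_cong[OF assms] by blast
  ultimately have "?enc n"
    using n w by (auto simp: k_start_def length_rel_bits input_bit_def nth_append)
  then show "\<exists>n. ?enc n" ..
next
  assume "\<exists>n. ?enc n"
  then obtain n where "?enc n" ..
  then show "w \<in> RM_lang m ar c psi"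
    unfolding RM_lang_def using word_eq_encoding_decode decode_family by blast
qed

definition local_facts :: "nat list \<Rightarrow> nat \<Rightarrow> nat set \<Rightarrow> (nat \<times> nat list) list" where
  "local_facts ar n A = filter (\<lambda>p. p \<in> facts ar A) (all_facts ar n)"

definition local_positions :: "nat list \<Rightarrow> nat \<Rightarrow> nat set \<Rightarrow> nat list" where
  "local_positions ar n A = map (fact_pos ar n) (local_facts ar n A)"

lemma set_local_facts: "A \<subseteq> {0..<n} \<Longrightarrow> set (local_facts ar n A) = facts ar A"
  using facts_mono[of A "{0..<n}" ar] by (auto simp: local_facts_def set_all_facts)

lemma agree_on_decode:
  assumes "A \<subseteq> {0..<n}"
    and "map (input_bit w) (local_positions ar n A) = map (input_bit w') (local_positions ar n A)"
  shows "agree_on ar A (decode ar n w) (decode ar n w')"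
  unfolding agree_on_def
proof (intro ballI, clarify)
  fix i t assume it: "(i, t) \<in> facts ar A"
  then have "fact_pos ar n (i, t) \<in> set (local_positions ar n A)"
    using assms(1) by (simp add: local_positions_def set_local_facts)
  then have "input_bit w (fact_pos ar n (i, t)) \<longleftrightarrow> input_bit w' (fact_pos ar n (i, t))"
    using assms(2) by (simp add: map_eq_conv)
  then show "t \<in> decode ar n w i \<longleftrightarrow> t \<in> decode ar n w' i"
    by (simp add: decode_def)
qed

lemma length_local_facts_le: "finite A \<Longrightarrow> length (local_facts ar n A) \<le> card (facts ar A)"
  unfolding local_facts_def
  using distinct_length_filter[OF distinct_all_facts, of "\<lambda>p. p \<in> facts ar A" ar n] finite_facts[of A ar]
  by (simp add: card_mono)

definition facts_of :: "nat list \<Rightarrow> (nat \<Rightarrow> nat list set) \<Rightarrow> (nat \<times> nat list) set" where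
  "facts_of ar S = (SIGMA i:{..<length ar}. S i)"

definition rels_of :: "(nat \<times> nat list) set \<Rightarrow> nat \<Rightarrow> nat list set" where
  "rels_of F i = {t. (i, t) \<in> F}"

definition allowed :: "mode \<Rightarrow> (nat \<Rightarrow> nat list set) \<Rightarrow> nat \<times> nat list \<Rightarrow> bool" where
  "allowed m R p \<longleftrightarrow> (case m of Del \<Rightarrow> snd p \<in> R (fst p) | Add \<Rightarrow> snd p \<notin> R (fst p) | Edit \<Rightarrow> True)"

lemma mode_ok_iff_allowed: "mode_ok m ar R S \<longleftrightarrow> (\<forall>p \<in> facts_of ar S. allowed m R p)"
  by (auto simp: mode_ok_def allowed_def facts_of_def split: mode.split)

lemma rels_of_facts_of: "i < length ar \<Longrightarrow> rels_of (facts_of ar S) i = S i"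
  by (simp add: rels_of_def facts_of_def)

lemma facts_of_rels_of: "F \<subseteq> facts ar UNIV \<Longrightarrow> facts_of ar (rels_of F) = F"
  by (auto simp: facts_of_def rels_of_def facts_def)

lemma finite_rels_of: "finite F \<Longrightarrow> finite (rels_of F i)"
  by (rule finite_subset[of _ "snd ` F"]) (force simp: rels_of_def)+

lemma mod_norm_eq_card:
  assumes "\<forall>i < length ar. finite (S i)"
  shows "mod_norm ar S = card (facts_of ar S)"
  using assms by (simp add: mod_norm_def facts_of_def card_SigmaI)

lemma agree_on_apply_mod:
  assumes "agree_on ar A R R'" and "F \<inter> facts ar A = F' \<inter> facts ar A"
  shows "agree_on ar A (apply_mod R (rels_of F)) (apply_mod R' (rels_of F'))"
  using assms by (auto simp: agree_on_def apply_mod_def rels_of_def; blast)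

lemma allowed_cong:
  "F \<subseteq> facts ar A \<Longrightarrow> agree_on ar A R R' \<Longrightarrow> (\<forall>p\<in>F. allowed m R p) \<longleftrightarrow> (\<forall>p\<in>F. allowed m R' p)"
  by (auto simp: agree_on_def allowed_def split: mode.split) (fastforce+)

section \<open>Splitting a modulator along the universal variable\<close>

locale EA_sentence =
  fixes ar :: "nat list" and c :: nat and psi :: qf and md :: mode
  assumes psi_wf: "qf_wf ar c psi"
begin

definition holds_at :: "(nat \<Rightarrow> nat list set) \<Rightarrow> nat list \<Rightarrow> nat \<Rightarrow> bool" where
  "holds_at R xs y \<longleftrightarrow> qf_sem R (\<lambda>j. (xs @ [y]) ! j) psi"

definition new_facts :: "nat list \<Rightarrow> nat \<Rightarrow> (nat \<times> nat list) set" where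
  "new_facts xs y = {p \<in> facts ar (insert y (set xs)). y \<in> set (snd p)}"

definition core_ok :: "(nat \<Rightarrow> nat list set) \<Rightarrow> nat list \<Rightarrow> (nat \<times> nat list) set \<Rightarrow> bool" where
  "core_ok R xs Sp \<longleftrightarrow>
     (\<forall>p\<in>Sp. allowed md R p) \<and> (\<forall>x\<in>set xs. holds_at (apply_mod R (rels_of Sp)) xs x)"

definition repairs ::
  "(nat \<Rightarrow> nat list set) \<Rightarrow> nat list \<Rightarrow> (nat \<times> nat list) set \<Rightarrow> nat \<Rightarrow> (nat \<times> nat list) set \<Rightarrow> bool"
where
  "repairs R xs Sp y Sy \<longleftrightarrow>
     Sy \<subseteq> new_facts xs y \<and> (\<forall>p\<in>Sy. allowed md R p) \<and> holds_at (apply_mod R (rels_of (Sp \<union> Sy))) xs y"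

definition repairable :: "(nat \<Rightarrow> nat list set) \<Rightarrow> nat list \<Rightarrow> (nat \<times> nat list) set \<Rightarrow> nat \<Rightarrow> bool" where
  "repairable R xs Sp y \<longleftrightarrow> (\<exists>Sy. repairs R xs Sp y Sy)"

definition repair_cost :: "(nat \<Rightarrow> nat list set) \<Rightarrow> nat list \<Rightarrow> (nat \<times> nat list) set \<Rightarrow> nat \<Rightarrow> nat" where
  "repair_cost R xs Sp y = (LEAST k. \<exists>Sy. repairs R xs Sp y Sy \<and> card Sy = k)"

definition local_solution ::
  "nat \<Rightarrow> (nat \<Rightarrow> nat list set) \<Rightarrow> nat list \<Rightarrow> (nat \<times> nat list) set \<Rightarrow> nat \<Rightarrow> bool"
where
  "local_solution n R xs Sp k \<longleftrightarrow>
     Sp \<subseteq> facts ar (set xs) \<and> core_ok R xs Sp \<and> (\<forall>y \<in> {0..<n} - set xs. repairable R xs Sp y) \<and>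
     card Sp + (\<Sum>y \<in> {0..<n} - set xs. repair_cost R xs Sp y) \<le> k"

lemma holds_at_cong:
  assumes "length xs = c" and "agree_on ar (insert y (set xs)) R R'"
  shows "holds_at R xs y \<longleftrightarrow> holds_at R' xs y"
proof -
  have "(xs @ [y]) ! j \<in> insert y (set xs)" if "j \<le> c" for j
    using that assms(1) nth_mem[of j "xs @ [y]"] by simp
  then show ?thesis
    unfolding holds_at_def using qf_sem_cong[OF psi_wf _ assms(2)] by blast
qed

lemma holds_at_apply_mod_cong:
  assumes "length xs = c" and "F \<inter> facts ar (insert y (set xs)) = F' \<inter> facts ar (insert y (set xs))"
  shows "holds_at (apply_mod R (rels_of F)) xs y \<longleftrightarrow> holds_at (apply_mod R (rels_of F')) xs y"
  using assms agree_on_apply_mod[of ar _ R R] by (intro holds_at_cong) (auto simp: agree_on_def)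

lemma new_facts_subset: "new_facts xs y \<subseteq> facts ar (insert y (set xs))"
  by (auto simp: new_facts_def)

lemma finite_new_facts: "finite (new_facts xs y)"
  using finite_facts[of "insert y (set xs)" ar] new_facts_subset finite_subset by blast

lemma local_union:
  assumes Sp: "Sp \<subseteq> facts ar (set xs)" and Sy: "\<forall>y\<in>Y. Sy y \<subseteq> new_facts xs y"
    and Y: "Y \<inter> set xs = {}"
  defines "U \<equiv> Sp \<union> (\<Union>y\<in>Y. Sy y)"
  shows "U \<inter> facts ar (set xs) = Sp"
    and "y \<in> Y \<Longrightarrow> U \<inter> facts ar (insert y (set xs)) = Sp \<union> Sy y"
    and "finite Y \<Longrightarrow> card U = card Sp + (\<Sum>y\<in>Y. card (Sy y))"
proof -
  have mentions: "y \<in> set (snd p)" if "y \<in> Y" "p \<in> Sy y" for y p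
    using that Sy by (auto simp: new_facts_def)
  have over: "set (snd p) \<subseteq> insert y (set xs)" if "y \<in> Y" "p \<in> Sy y" for y p
    using that Sy new_facts_subset set_snd_facts by blast
  show "U \<inter> facts ar (set xs) = Sp"
    using Sp Y mentions by (fastforce simp: U_def facts_def)
  show "U \<inter> facts ar (insert y (set xs)) = Sp \<union> Sy y" if "y \<in> Y"
  proof -
    have "Sy y \<subseteq> facts ar (insert y (set xs))" using that Sy new_facts_subset by blast
    moreover have "p \<notin> facts ar (insert y (set xs))" if "y' \<in> Y" "y' \<noteq> y" "p \<in> Sy y'" for y' p
      using that mentions[OF that(1,3)] Y by (auto simp: facts_def)
    moreover have "Sp \<subseteq> facts ar (insert y (set xs))"
      using Sp facts_mono[of "set xs" "insert y (set xs)" ar] by blast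
    ultimately show ?thesis using \<open>y \<in> Y\<close> unfolding U_def by blast
  qed
  show "card U = card Sp + (\<Sum>y\<in>Y. card (Sy y))" if "finite Y"
  proof -
    have fin: "finite Sp" "\<forall>y\<in>Y. finite (Sy y)"
      using Sp Sy finite_facts[of "set xs" ar] finite_new_facts finite_subset by blast+
    have "Sy y \<inter> Sy y' = {}" if "y \<in> Y" "y' \<in> Y" "y \<noteq> y'" for y y'
      using that mentions over Y by blast
    then have "card (\<Union>y\<in>Y. Sy y) = (\<Sum>y\<in>Y. card (Sy y))"
      using fin \<open>finite Y\<close> by (intro card_UN_disjoint) auto
    moreover have "Sp \<inter> (\<Union>y\<in>Y. Sy y) = {}"
      using Sp mentions Y by (fastforce simp: facts_def)
    ultimately show ?thesis
      using fin \<open>finite Y\<close> by (simp add: U_def card_Un_disjoint)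
  qed
qed

definition fact_solution ::
  "nat \<Rightarrow> (nat \<Rightarrow> nat list set) \<Rightarrow> (nat \<times> nat list) set \<Rightarrow> nat list \<Rightarrow> bool"
where
  "fact_solution n R F xs \<longleftrightarrow>
     F \<subseteq> facts ar {0..<n} \<and> (\<forall>p\<in>F. allowed md R p) \<and> length xs = c \<and> set xs \<subseteq> {0..<n} \<and>
     (\<forall>y<n. holds_at (apply_mod R (rels_of F)) xs y)"

lemma fact_solution_if_RM:
  assumes "RM md ar c psi n R k"
  obtains F xs where "fact_solution n R F xs" "card F \<le> k"
proof -
  obtain S xs where S: "is_rel_family ar n S" "mode_ok md ar R S" "mod_norm ar S \<le> k"
    and xs: "length xs = c" "set xs \<subseteq> {0..<n}" and sat: "\<forall>y<n. holds_at (apply_mod R S) xs y"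
    using assms unfolding RM_def sat_EA_def holds_at_def by blast
  have "\<forall>i < length ar. finite (S i)"
    using S(1) finite_tuples unfolding is_rel_family_def by (metis finite_subset)
  then have "card (facts_of ar S) \<le> k"
    using S(3) mod_norm_eq_card by simp
  moreover have "facts_of ar S \<subseteq> facts ar {0..<n}"
    using S(1) by (auto simp: is_rel_family_def facts_of_def facts_def tuples_def)
  moreover have "agree_on ar UNIV (apply_mod R S) (apply_mod R (rels_of (facts_of ar S)))"
    by (auto simp: agree_on_def mem_facts rels_of_facts_of apply_mod_def)
  then have "holds_at (apply_mod R S) xs y \<longleftrightarrow> holds_at (apply_mod R (rels_of (facts_of ar S))) xs y" for y
    by (intro holds_at_cong[OF xs(1)]) (rule agree_on_mono, auto)
  ultimately show thesis
    using that S(2) xs sat by (simp add: fact_solution_def mode_ok_iff_allowed)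
qed

lemma RM_if_fact_solution:
  assumes F: "fact_solution n R F xs" and card: "card F \<le> k"
  shows "RM md ar c psi n R k"
proof -
  have sub: "F \<subseteq> facts ar {0..<n}"
    using F by (simp add: fact_solution_def)
  have F_rels: "facts_of ar (rels_of F) = F"
    using sub facts_mono[of "{0..<n}" UNIV ar] by (intro facts_of_rels_of) blast
  have "length t = ar ! i \<and> set t \<subseteq> {0..<n}" if "(i, t) \<in> F" for i t
    using subsetD[OF sub that] by (simp add: mem_facts)
  then have "is_rel_family ar n (rels_of F)"
    by (auto simp: is_rel_family_def rels_of_def tuples_def)
  moreover have "mode_ok md ar R (rels_of F)"
    using F by (simp add: fact_solution_def mode_ok_iff_allowed F_rels)
  moreover have "finite F"
    using sub finite_facts[of "{0..<n}" ar] finite_subset by blast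
  then have "mod_norm ar (rels_of F) \<le> k"
    using card by (simp add: mod_norm_eq_card finite_rels_of F_rels)
  ultimately show ?thesis
    using F unfolding RM_def sat_EA_def fact_solution_def holds_at_def by blast
qed

lemma local_solution_if_fact_solution:
  assumes "fact_solution n R F xs"
  shows "local_solution n R xs (F \<inter> facts ar (set xs)) (card F)"
proof -
  have F: "F \<subseteq> facts ar {0..<n}" "\<forall>p\<in>F. allowed md R p"
    and xs: "length xs = c" "set xs \<subseteq> {0..<n}" and holds: "\<forall>y<n. holds_at (apply_mod R (rels_of F)) xs y"
    using assms by (simp_all add: fact_solution_def)
  define Y where "Y = {0..<n} - set xs"
  define Sp where "Sp = F \<inter> facts ar (set xs)"
  define Sy where "Sy y = F \<inter> new_facts xs y" for y
  have core: "core_ok R xs Sp"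
    unfolding core_ok_def
  proof (intro conjI ballI)
    fix x assume x: "x \<in> set xs"
    have "holds_at (apply_mod R (rels_of F)) xs x \<longleftrightarrow> holds_at (apply_mod R (rels_of Sp)) xs x"
      by (rule holds_at_apply_mod_cong[OF xs(1)]) (use x in \<open>auto simp: Sp_def insert_absorb\<close>)
    then show "holds_at (apply_mod R (rels_of Sp)) xs x"
      using holds x xs(2) by auto
  qed (use F(2) in \<open>simp add: Sp_def\<close>)
  have repairs: "repairs R xs Sp y (Sy y)" if "y \<in> Y" for y
    unfolding repairs_def
  proof (intro conjI)
    have "F \<inter> facts ar (insert y (set xs)) = (Sp \<union> Sy y) \<inter> facts ar (insert y (set xs))"
      unfolding Sp_def Sy_def new_facts_def by (subst (1 2) facts_insert) blast
    then have "holds_at (apply_mod R (rels_of F)) xs y \<longleftrightarrow> holds_at (apply_mod R (rels_of (Sp \<union> Sy y))) xs y"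
      by (rule holds_at_apply_mod_cong[OF xs(1)])
    then show "holds_at (apply_mod R (rels_of (Sp \<union> Sy y))) xs y"
      using holds that by (simp add: Y_def)
  qed (use F(2) in \<open>auto simp: Sy_def\<close>)
  have "card Sp + (\<Sum>y\<in>Y. repair_cost R xs Sp y) \<le> card Sp + (\<Sum>y\<in>Y. card (Sy y))"
    unfolding repair_cost_def using repairs by (intro add_left_mono sum_mono Least_le) blast
  also have "\<dots> = card (Sp \<union> (\<Union>y\<in>Y. Sy y))"
    by (rule local_union(3)[symmetric]) (auto simp: Sp_def Sy_def Y_def)
  also have "\<dots> \<le> card F"
    using F(1) finite_facts[of "{0..<n}" ar] finite_subset by (intro card_mono) (auto simp: Sp_def Sy_def)
  finally show ?thesis
    using core repairs unfolding local_solution_def repairable_def Y_def Sp_def by blast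
qed

lemma optimal_repair:
  assumes "repairable R xs Sp y"
  obtains Sy where "repairs R xs Sp y Sy" "card Sy = repair_cost R xs Sp y"
  using assms LeastI_ex[of "\<lambda>k. \<exists>Sy. repairs R xs Sp y Sy \<and> card Sy = k"]
  unfolding repairable_def repair_cost_def by blast

lemma holds_at_local_union:
  assumes xs: "length xs = c" and Sp: "Sp \<subseteq> facts ar (set xs)" and core: "core_ok R xs Sp"
    and Sy: "\<forall>y\<in>Y. repairs R xs Sp y (Sy y)" and Y: "Y \<inter> set xs = {}" and y: "y \<in> set xs \<union> Y"
  shows "holds_at (apply_mod R (rels_of (Sp \<union> (\<Union>y\<in>Y. Sy y)))) xs y"
proof -
  let ?U = "Sp \<union> (\<Union>y\<in>Y. Sy y)"
  have Sy_new: "\<forall>y\<in>Y. Sy y \<subseteq> new_facts xs y"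
    using Sy by (simp add: repairs_def)
  show ?thesis
  proof (cases "y \<in> set xs")
    case True
    then have "?U \<inter> facts ar (insert y (set xs)) = Sp \<inter> facts ar (insert y (set xs))"
      using local_union(1)[OF Sp Sy_new Y] Sp by (simp add: insert_absorb Int_absorb2)
    then have "holds_at (apply_mod R (rels_of ?U)) xs y \<longleftrightarrow> holds_at (apply_mod R (rels_of Sp)) xs y"
      by (rule holds_at_apply_mod_cong[OF xs])
    then show ?thesis
      using core True by (simp add: core_ok_def)
  next
    case False
    then have y: "y \<in> Y" using y by simp
    have "?U \<inter> facts ar (insert y (set xs)) = (Sp \<union> Sy y) \<inter> facts ar (insert y (set xs))"
      using local_union(2)[OF Sp Sy_new Y y] by blast
    then have "holds_at (apply_mod R (rels_of ?U)) xs y \<longleftrightarrow>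
        holds_at (apply_mod R (rels_of (Sp \<union> Sy y))) xs y"
      by (rule holds_at_apply_mod_cong[OF xs])
    then show ?thesis
      using Sy y by (simp add: repairs_def)
  qed
qed

lemma fact_solution_if_local_solution:
  assumes xs: "length xs = c" "set xs \<subseteq> {0..<n}" and sol: "local_solution n R xs Sp k"
  obtains F where "fact_solution n R F xs" "card F \<le> k"
proof -
  define Y where "Y = {0..<n} - set xs"
  have Sp: "Sp \<subseteq> facts ar (set xs)" and core: "core_ok R xs Sp"
    and cost: "card Sp + (\<Sum>y\<in>Y. repair_cost R xs Sp y) \<le> k"
    and repairable: "\<forall>y\<in>Y. repairable R xs Sp y"
    using sol by (auto simp: local_solution_def Y_def)
  have "\<forall>y\<in>Y. \<exists>S. repairs R xs Sp y S \<and> card S = repair_cost R xs Sp y"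
    using repairable optimal_repair by metis
  then obtain Sy where Sy: "\<forall>y\<in>Y. repairs R xs Sp y (Sy y) \<and> card (Sy y) = repair_cost R xs Sp y"
    by (metis bchoice)
  define U where "U = Sp \<union> (\<Union>y\<in>Y. Sy y)"
  have Sy_new: "\<forall>y\<in>Y. Sy y \<subseteq> new_facts xs y"
    using Sy by (simp add: repairs_def)
  have Y: "Y \<inter> set xs = {}" by (auto simp: Y_def)
  have "Sy y \<subseteq> facts ar {0..<n}" if "y \<in> Y" for y
  proof -
    have "insert y (set xs) \<subseteq> {0..<n}" using that xs(2) by (auto simp: Y_def)
    then show ?thesis
      using that Sy_new new_facts_subset[of xs y] facts_mono[of "insert y (set xs)" "{0..<n}" ar] by blast
  qed
  then have "U \<subseteq> facts ar {0..<n}"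
    unfolding U_def using Sp facts_mono[OF xs(2)] by blast
  moreover have "\<forall>p\<in>U. allowed md R p"
    using core Sy unfolding U_def core_ok_def repairs_def by blast
  moreover have "holds_at (apply_mod R (rels_of U)) xs y" if "y < n" for y
    unfolding U_def using Sy that by (intro holds_at_local_union[OF xs(1) Sp core _ Y]) (auto simp: Y_def)
  moreover have "card U \<le> k"
    using local_union(3)[OF Sp Sy_new Y] Sy cost by (simp add: U_def Y_def)
  ultimately have "fact_solution n R U xs"
    using xs by (simp add: fact_solution_def)
  then show thesis using that \<open>card U \<le> k\<close> by blast
qed

theorem RM_iff_local_solution:
  "RM md ar c psi n R k \<longleftrightarrow>
     (\<exists>xs Sp. length xs = c \<and> set xs \<subseteq> {0..<n} \<and> local_solution n R xs Sp k)"
proof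
  assume "RM md ar c psi n R k"
  then obtain F xs where F: "fact_solution n R F xs" "card F \<le> k"
    by (rule fact_solution_if_RM)
  then have "local_solution n R xs (F \<inter> facts ar (set xs)) k"
    using local_solution_if_fact_solution[OF F(1)] by (auto simp: local_solution_def)
  then show "\<exists>xs Sp. length xs = c \<and> set xs \<subseteq> {0..<n} \<and> local_solution n R xs Sp k"
    using F(1) by (auto simp: fact_solution_def)
next
  assume "\<exists>xs Sp. length xs = c \<and> set xs \<subseteq> {0..<n} \<and> local_solution n R xs Sp k"
  then obtain xs Sp where "length xs = c" "set xs \<subseteq> {0..<n}" "local_solution n R xs Sp k"
    by blast
  then obtain F where "fact_solution n R F xs" "card F \<le> k"
    by (rule fact_solution_if_local_solution)
  then show "RM md ar c psi n R k"
    by (rule RM_if_fact_solution)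
qed

definition local_bound :: nat where
  "local_bound = (\<Sum>i<length ar. (c + 1) ^ (ar ! i))"

lemma card_facts_le: "finite A \<Longrightarrow> card A \<le> c + 1 \<Longrightarrow> card (facts ar A) \<le> local_bound"
  unfolding local_bound_def by (simp add: card_facts sum_mono power_mono)

lemma card_insert_set_le: "length xs = c \<Longrightarrow> card (insert y (set xs)) \<le> c + 1"
  using card_length[of xs] by (simp add: card_insert_if)

lemma repair_cost_le:
  assumes "length xs = c" and "repairable R xs Sp y"
  shows "repair_cost R xs Sp y \<le> local_bound"
proof -
  obtain Sy where Sy: "repairs R xs Sp y Sy" "card Sy = repair_cost R xs Sp y"
    using optimal_repair[OF assms(2)] .
  have "card Sy \<le> card (facts ar (insert y (set xs)))"
    using Sy(1) new_facts_subset finite_facts[of "insert y (set xs)" ar]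
    by (intro card_mono) (auto simp: repairs_def)
  also have "\<dots> \<le> local_bound"
    using card_facts_le[OF _ card_insert_set_le[OF assms(1)]] by simp
  finally show ?thesis
    using Sy(2) by simp
qed

lemma core_ok_cong:
  assumes xs: "length xs = c" and Sp: "Sp \<subseteq> facts ar (set xs)" and agree: "agree_on ar (set xs) R R'"
  shows "core_ok R xs Sp \<longleftrightarrow> core_ok R' xs Sp"
proof -
  have "holds_at (apply_mod R (rels_of Sp)) xs x \<longleftrightarrow> holds_at (apply_mod R' (rels_of Sp)) xs x"
    if "x \<in> set xs" for x
    by (rule holds_at_cong[OF xs]) (use that agree agree_on_apply_mod in \<open>simp add: insert_absorb\<close>)
  moreover have "(\<forall>p\<in>Sp. allowed md R p) \<longleftrightarrow> (\<forall>p\<in>Sp. allowed md R' p)"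
    by (rule allowed_cong[OF Sp agree])
  ultimately show ?thesis
    unfolding core_ok_def by simp
qed

lemma repairs_cong:
  assumes xs: "length xs = c" and agree: "agree_on ar (insert y (set xs)) R R'"
  shows "repairs R xs Sp y Sy \<longleftrightarrow> repairs R' xs Sp y Sy"
proof -
  have "(\<forall>p\<in>Sy. allowed md R p) \<longleftrightarrow> (\<forall>p\<in>Sy. allowed md R' p)" if "Sy \<subseteq> new_facts xs y"
    using that new_facts_subset by (intro allowed_cong[OF _ agree]) blast
  moreover have "holds_at (apply_mod R (rels_of (Sp \<union> Sy))) xs y \<longleftrightarrow>
      holds_at (apply_mod R' (rels_of (Sp \<union> Sy))) xs y"
    by (rule holds_at_cong[OF xs]) (use agree agree_on_apply_mod in simp)
  ultimately show ?thesis
    unfolding repairs_def by blast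
qed

lemma repair_cong:
  assumes "length xs = c" and "agree_on ar (insert y (set xs)) R R'"
  shows "repairable R xs Sp y \<longleftrightarrow> repairable R' xs Sp y"
    and "repair_cost R xs Sp y = repair_cost R' xs Sp y"
proof -
  have "repairs R xs Sp y = repairs R' xs Sp y"
    using repairs_cong[OF assms] by blast
  then show "repairable R xs Sp y \<longleftrightarrow> repairable R' xs Sp y"
    and "repair_cost R xs Sp y = repair_cost R' xs Sp y"
    by (simp_all add: repairable_def repair_cost_def)
qed

end

section \<open>A threshold formula deciding the problem\<close>

lemma sum_list_map_concat: "sum_list (map f (concat xss)) = sum_list (map (\<lambda>xs. sum_list (map f xs)) xss)"
  by (induction xss) auto

lemma sum_binary_digits:
  "b \<le> length w \<Longrightarrow>
     sum_list (map (\<lambda>i. if input_bit w (b + i) then 2 ^ i else 0) [0..<length w - b]) = bits_val (drop b w)"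
  unfolding bits_val_def sum_set_upt_conv_sum_list_nat[symmetric]
  by (simp add: atLeast0LessThan input_bit_def) (rule sum.cong; auto)

lemma count_not_less: "sum_list (map (\<lambda>j. if \<not> j < f then 1 else 0) [0..<B]) = B - (f :: nat)"
  by (induction B) auto

lemma slack_le_iff:
  fixes f :: "'a \<Rightarrow> nat"
  assumes "\<forall>y\<in>set ys. f y \<le> B"
  shows "T + B * length ys \<le> k + sum_list (map (\<lambda>y. B - f y) ys) \<longleftrightarrow> T + sum_list (map f ys) \<le> k"
proof -
  have "sum_list (map (\<lambda>y. B - f y) ys) + sum_list (map f ys) = B * length ys"
    using assms by (induction ys) auto
  then show ?thesis by linarith
qed

context EA_sentence
begin

definition others :: "nat \<Rightarrow> nat list \<Rightarrow> nat list" where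
  "others n xs = filter (\<lambda>y. y \<notin> set xs) [0..<n]"

definition core_formula :: "nat \<Rightarrow> nat list \<Rightarrow> (nat \<times> nat list) set \<Rightarrow> tform" where
  "core_formula n xs Sp = dnf (local_positions ar n (set xs)) (\<lambda>w. core_ok (decode ar n w) xs Sp)"

definition repairable_formula :: "nat \<Rightarrow> nat list \<Rightarrow> (nat \<times> nat list) set \<Rightarrow> nat \<Rightarrow> tform" where
  "repairable_formula n xs Sp y =
     dnf (local_positions ar n (insert y (set xs))) (\<lambda>w. repairable (decode ar n w) xs Sp y)"

definition cost_formula :: "nat \<Rightarrow> nat list \<Rightarrow> (nat \<times> nat list) set \<Rightarrow> nat \<Rightarrow> nat \<Rightarrow> tform" where
  "cost_formula n xs Sp y j =
     dnf (local_positions ar n (insert y (set xs))) (\<lambda>w. j < repair_cost (decode ar n w) xs Sp y)"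

text \<open>
  Threshold weights are nonnegative, so \<open>card Sp + (\<Sum>y. cost y) \<le> k\<close> is tested in the form
  \<open>card Sp + local_bound * length (others n xs) \<le> k + (\<Sum>y. local_bound - cost y)\<close>: the bits
  of \<open>k\<close> enter with weights \<open>2 ^ i\<close>, and each \<open>local_bound - cost y\<close> is counted in unary by
  the negated cost formulas.
\<close>

definition budget_formula :: "nat \<Rightarrow> nat \<Rightarrow> nat list \<Rightarrow> (nat \<times> nat list) set \<Rightarrow> tform" where
  "budget_formula M n xs Sp = TThr (card Sp + local_bound * length (others n xs))
     (map (\<lambda>i. (2 ^ i, TIn (k_start ar n + i))) [0..<M - k_start ar n] @
      concat (map (\<lambda>y. map (\<lambda>j. (1, TNot (cost_formula n xs Sp y j))) [0..<local_bound]) (others n xs)))"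

definition candidate_formula :: "nat \<Rightarrow> nat \<Rightarrow> nat list \<Rightarrow> (nat \<times> nat list) set \<Rightarrow> tform" where
  "candidate_formula M n xs Sp = TAnd (core_formula n xs Sp # budget_formula M n xs Sp #
     map (repairable_formula n xs Sp) (others n xs))"

definition solution_formula :: "nat \<Rightarrow> nat \<Rightarrow> tform" where
  "solution_formula M n = TOr (concat (map (\<lambda>xs. map (\<lambda>F. candidate_formula M n xs (set F))
     (subseqs (local_facts ar n (set xs)))) (List.n_lists c [0..<n])))"

definition header_formula :: "nat \<Rightarrow> tform" where
  "header_formula n = TAnd (TNot (TIn n) # map TIn [0..<n])"

definition RM_formula :: "nat \<Rightarrow> tform" where
  "RM_formula M = TOr (map (\<lambda>n. TAnd [header_formula n, solution_formula M n])
     (filter (\<lambda>n. 0 < n \<and> k_start ar n \<le> M) [0..<M]))"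

lemma set_others: "set (others n xs) = {0..<n} - set xs"
  by (auto simp: others_def)

lemma length_others_le: "length (others n xs) \<le> n"
  unfolding others_def using length_filter_le[of _ "[0..<n]"] by simp

context
  fixes n xs Sp
  assumes xs: "length xs = c" "set xs \<subseteq> {0..<n}" and Sp: "Sp \<subseteq> facts ar (set xs)"
begin

lemma teval_core_formula: "teval w (core_formula n xs Sp) \<longleftrightarrow> core_ok (decode ar n w) xs Sp"
  unfolding core_formula_def
  by (rule dnf_correct, rule core_ok_cong[OF xs(1) Sp agree_on_decode[OF xs(2)]])

lemma teval_repairable_formula:
  assumes "y < n"
  shows "teval w (repairable_formula n xs Sp y) \<longleftrightarrow> repairable (decode ar n w) xs Sp y"
  unfolding repairable_formula_def
  using assms xs by (intro dnf_correct repair_cong(1) agree_on_decode) auto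

lemma teval_cost_formula:
  assumes "y < n"
  shows "teval w (cost_formula n xs Sp y j) \<longleftrightarrow> j < repair_cost (decode ar n w) xs Sp y"
  unfolding cost_formula_def
proof (rule dnf_correct)
  fix w w' :: "bool list"
  assume "map (input_bit w) (local_positions ar n (insert y (set xs))) =
    map (input_bit w') (local_positions ar n (insert y (set xs)))"
  then have "repair_cost (decode ar n w) xs Sp y = repair_cost (decode ar n w') xs Sp y"
    using assms xs by (intro repair_cong(2) agree_on_decode) auto
  then show "j < repair_cost (decode ar n w) xs Sp y \<longleftrightarrow> j < repair_cost (decode ar n w') xs Sp y"
    by simp
qed

lemma teval_budget_formula:
  assumes w: "k_start ar n \<le> length w"
    and rep: "\<forall>y \<in> {0..<n} - set xs. repairable (decode ar n w) xs Sp y"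
  shows "teval w (budget_formula (length w) n xs Sp) \<longleftrightarrow>
    card Sp + (\<Sum>y \<in> {0..<n} - set xs. repair_cost (decode ar n w) xs Sp y) \<le> bits_val (drop (k_start ar n) w)"
proof -
  let ?cost = "\<lambda>y. repair_cost (decode ar n w) xs Sp y"
  let ?g = "\<lambda>p. if teval w (snd p) then fst p else (0::nat)"
  have bits: "sum_list (map ?g (map (\<lambda>i. (2 ^ i, TIn (k_start ar n + i))) [0..<length w - k_start ar n]))
      = bits_val (drop (k_start ar n) w)"
    unfolding map_map comp_def prod.sel teval.simps by (rule sum_binary_digits[OF w])
  have "sum_list (map ?g (map (\<lambda>j. (1, TNot (cost_formula n xs Sp y j))) [0..<local_bound]))
      = local_bound - ?cost y" if "y \<in> set (others n xs)" for y
    using that count_not_less[of "?cost y" local_bound]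
    by (simp add: comp_def teval_cost_formula others_def cong: if_cong)
  then have counts: "sum_list (map ?g (concat (map (\<lambda>y. map (\<lambda>j. (1, TNot (cost_formula n xs Sp y j)))
      [0..<local_bound]) (others n xs)))) = sum_list (map (\<lambda>y. local_bound - ?cost y) (others n xs))"
    by (simp add: sum_list_map_concat comp_def cong: map_cong)
  have "teval w (budget_formula (length w) n xs Sp) \<longleftrightarrow>
      card Sp + local_bound * length (others n xs) \<le>
      bits_val (drop (k_start ar n) w) + sum_list (map (\<lambda>y. local_bound - ?cost y) (others n xs))"
    unfolding budget_formula_def teval.simps map_append sum_list_append bits counts ..
  also have "\<dots> \<longleftrightarrow> card Sp + sum_list (map ?cost (others n xs)) \<le> bits_val (drop (k_start ar n) w)"
    using rep repair_cost_le[OF xs(1)] by (intro slack_le_iff) (simp add: set_others)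
  also have "sum_list (map ?cost (others n xs)) = (\<Sum>y \<in> {0..<n} - set xs. ?cost y)"
    unfolding set_others[symmetric] by (rule sum_list_distinct_conv_sum_set) (simp add: others_def)
  finally show ?thesis .
qed

lemma teval_candidate_formula:
  assumes "k_start ar n \<le> length w"
  shows "teval w (candidate_formula (length w) n xs Sp) \<longleftrightarrow>
    local_solution n (decode ar n w) xs Sp (bits_val (drop (k_start ar n) w))"
proof -
  have "(\<forall>f \<in> set (map (repairable_formula n xs Sp) (others n xs)). teval w f) \<longleftrightarrow>
      (\<forall>y \<in> {0..<n} - set xs. repairable (decode ar n w) xs Sp y)"
    by (simp add: set_others teval_repairable_formula)
  then show ?thesis
    using teval_budget_formula[OF assms] Sp
    by (auto simp: candidate_formula_def local_solution_def teval_core_formula)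
qed

end

lemma teval_solution_formula:
  assumes "k_start ar n \<le> length w"
  shows "teval w (solution_formula (length w) n) \<longleftrightarrow>
    (\<exists>xs Sp. length xs = c \<and> set xs \<subseteq> {0..<n} \<and>
       local_solution n (decode ar n w) xs Sp (bits_val (drop (k_start ar n) w)))"
    (is "_ \<longleftrightarrow> (\<exists>xs Sp. length xs = c \<and> set xs \<subseteq> {0..<n} \<and> ?sol xs Sp)")
proof -
  have "(\<exists>F \<in> set (subseqs (local_facts ar n (set xs))). teval w (candidate_formula (length w) n xs (set F)))
      \<longleftrightarrow> (\<exists>Sp. ?sol xs Sp)" if xs: "length xs = c" "set xs \<subseteq> {0..<n}" for xs
  proof -
    have "set ` set (subseqs (local_facts ar n (set xs))) = Pow (facts ar (set xs))"
      by (simp add: subseqs_powset set_local_facts[OF xs(2)])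
    then have "(\<exists>F \<in> set (subseqs (local_facts ar n (set xs))). teval w (candidate_formula (length w) n xs (set F)))
        \<longleftrightarrow> (\<exists>Sp \<in> Pow (facts ar (set xs)). teval w (candidate_formula (length w) n xs Sp))"
      by (metis (no_types, lifting) image_iff)
    also have "\<dots> \<longleftrightarrow> (\<exists>Sp. ?sol xs Sp)"
      using teval_candidate_formula[OF xs _ assms] by (auto simp: local_solution_def)
    finally show ?thesis .
  qed
  then have "(\<exists>xs \<in> set (List.n_lists c [0..<n]).
        \<exists>F \<in> set (subseqs (local_facts ar n (set xs))). teval w (candidate_formula (length w) n xs (set F)))
      \<longleftrightarrow> (\<exists>xs Sp. length xs = c \<and> set xs \<subseteq> {0..<n} \<and> ?sol xs Sp)"
    unfolding set_n_lists set_upt mem_Collect_eq by blast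
  then show ?thesis
    by (simp add: solution_formula_def)
qed

lemma teval_header_formula:
  "teval w (header_formula n) \<longleftrightarrow> (\<forall>j<n. input_bit w j) \<and> \<not> input_bit w n"
  by (auto simp: header_formula_def)

theorem teval_RM_formula: "teval w (RM_formula (length w)) \<longleftrightarrow> w \<in> RM_lang md ar c psi"
proof -
  have "k_start ar n \<le> length w \<Longrightarrow> n < length w" for n
    by (simp add: k_start_def)
  then have "teval w (RM_formula (length w)) \<longleftrightarrow>
      (\<exists>n. 0 < n \<and> k_start ar n \<le> length w \<and> (\<forall>j<n. input_bit w j) \<and> \<not> input_bit w n \<and>
        (\<exists>xs Sp. length xs = c \<and> set xs \<subseteq> {0..<n} \<and>
           local_solution n (decode ar n w) xs Sp (bits_val (drop (k_start ar n) w))))"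
    by (auto simp: RM_formula_def teval_header_formula teval_solution_formula)
  also have "\<dots> \<longleftrightarrow> w \<in> RM_lang md ar c psi"
    by (simp add: RM_lang_iff[OF psi_wf] RM_iff_local_solution)
  finally show ?thesis .
qed

lemma tsize_dnf_local:
  "finite A \<Longrightarrow> card A \<le> c + 1 \<Longrightarrow> tsize (dnf (local_positions ar n A) Q) \<le> dnf_size local_bound"
proof -
  assume "finite A" "card A \<le> c + 1"
  then have "length (local_positions ar n A) \<le> local_bound"
    unfolding local_positions_def length_map by (intro le_trans[OF length_local_facts_le card_facts_le])
  then show ?thesis
    using tsize_dnf[of _ Q] dnf_size_mono le_trans by blast
qed

definition budget_size :: nat where
  "budget_size = (1 + local_bound) * Suc (dnf_size local_bound) + 1"

definition solution_size :: nat where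
  "solution_size = 2 ^ local_bound * (2 * budget_size + 1) + 1"

lemma tsize_budget_formula:
  assumes "length xs = c" and "n \<le> M"
  shows "tsize (budget_formula M n xs Sp) \<le> budget_size * (M + 1) ^ 1"
proof -
  have children: "tsize (cost_formula n xs Sp y j) \<le> dnf_size local_bound" for y j
    unfolding cost_formula_def using card_insert_set_le[OF assms(1)] by (simp add: tsize_dnf_local)
  have "length (others n xs) * local_bound \<le> M * local_bound"
    using length_others_le[of n xs] assms(2) by (intro mult_right_mono) simp_all
  moreover have "(1 + local_bound) * (M + 1) ^ 1 = M + M * local_bound + (1 + local_bound)"
    by (simp add: algebra_simps)
  ultimately have "M - k_start ar n + length (others n xs) * local_bound \<le> (1 + local_bound) * (M + 1) ^ 1"
    by linarith
  with children have "tsize (budget_formula M n xs Sp) \<le> budget_size * (M + 1) ^ (1 + 0)"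
    unfolding budget_formula_def budget_size_def
    by (intro tsize_TThr_poly) (auto simp: length_concat sum_list_triv comp_def)
  then show ?thesis by simp
qed

lemma tsize_candidate_formula:
  assumes "length xs = c" and "n \<le> M"
  shows "tsize (candidate_formula M n xs Sp) \<le> (2 * budget_size + 1) * (M + 1) ^ 2"
proof -
  have "dnf_size local_bound \<le> budget_size * (M + 1) ^ 1"
    unfolding budget_size_def by (simp add: algebra_simps)
  then have "\<forall>f \<in> set (core_formula n xs Sp # budget_formula M n xs Sp #
      map (repairable_formula n xs Sp) (others n xs)). tsize f \<le> budget_size * (M + 1) ^ 1"
    using tsize_budget_formula[OF assms] card_length[of xs] card_insert_set_le[OF assms(1)] assms(1)
    by (auto simp: core_formula_def repairable_formula_def intro: le_trans[OF tsize_dnf_local])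
  moreover have "length (core_formula n xs Sp # budget_formula M n xs Sp #
      map (repairable_formula n xs Sp) (others n xs)) \<le> 2 * (M + 1) ^ 1"
    using length_others_le[of n xs] assms(2) by simp
  ultimately have "tsize (candidate_formula M n xs Sp) \<le> (2 * budget_size + 1) * (M + 1) ^ (1 + 1)"
    unfolding candidate_formula_def by (intro tsize_TAnd_poly) simp_all
  then show ?thesis by (simp only: one_add_one)
qed

lemma tsize_solution_formula:
  assumes "n \<le> M"
  shows "tsize (solution_formula M n) \<le> solution_size * (M + 1) ^ (c + 2)"
proof -
  let ?fss = "map (\<lambda>xs. map (\<lambda>F. candidate_formula M n xs (set F)) (subseqs (local_facts ar n (set xs))))
    (List.n_lists c [0..<n])"
  have "\<forall>f \<in> set (concat ?fss). tsize f \<le> (2 * budget_size + 1) * (M + 1) ^ 2"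
    using tsize_candidate_formula[OF _ assms] by (auto simp: length_n_lists_elem)
  moreover have "length (concat ?fss) \<le> 2 ^ local_bound * (M + 1) ^ c"
  proof -
    have "length (local_facts ar n (set xs)) \<le> local_bound" if "length xs = c" for xs
      using card_length[of xs] that by (intro le_trans[OF length_local_facts_le card_facts_le]) auto
    then have "length (concat ?fss) \<le> sum_list (map (\<lambda>_. 2 ^ local_bound) (List.n_lists c [0..<n]))"
      by (auto simp: length_concat length_subseqs comp_def length_n_lists_elem intro!: sum_list_mono)
    also have "\<dots> \<le> 2 ^ local_bound * (M + 1) ^ c"
      using assms by (simp add: sum_list_triv length_n_lists power_mono)
    finally show ?thesis .
  qed
  ultimately have "tsize (solution_formula M n) \<le> solution_size * (M + 1) ^ (c + 2)"
    unfolding solution_formula_def solution_size_def by (intro tsize_TOr_poly) simp_all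
  then show ?thesis .
qed

lemma tsize_RM_formula: "tsize (RM_formula M) \<le> (2 * solution_size + 2) * (M + 1) ^ (c + 3)"
proof -
  have "tsize (TAnd [header_formula n, solution_formula M n]) \<le> (2 * solution_size + 1) * (M + 1) ^ (0 + (c + 2))"
    if "n < M" for n
  proof (rule tsize_TAnd_poly)
    have "tsize (header_formula n) \<le> Suc (length (TNot (TIn n) # map TIn [0..<n]) * 2)"
      unfolding header_formula_def by (rule tsize_TAnd_le) auto
    also have "\<dots> \<le> 3 * (M + 1) ^ 1"
      using that by simp
    also have "\<dots> \<le> solution_size * (M + 1) ^ (c + 2)"
    proof (intro mult_mono power_increasing)
      have "1 * 3 \<le> 2 ^ local_bound * (2 * budget_size + 1)"
        by (intro mult_mono) (auto simp: budget_size_def)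
      then show "3 \<le> solution_size" by (simp add: solution_size_def)
    qed auto
    finally show "\<forall>f\<in>set [header_formula n, solution_formula M n]. tsize f \<le> solution_size * (M + 1) ^ (c + 2)"
      using tsize_solution_formula[of n M] that by simp
  qed simp_all
  moreover have "length (filter (\<lambda>n. 0 < n \<and> k_start ar n \<le> M) [0..<M]) \<le> 1 * (M + 1) ^ 1"
    using length_filter_le[of _ "[0..<M]"] by (simp add: le_SucI)
  ultimately have "tsize (RM_formula M) \<le> (1 * (2 * solution_size + 1) + 1) * (M + 1) ^ (1 + (c + 2))"
    unfolding RM_formula_def by (intro tsize_TOr_poly) auto
  moreover have "1 * (2 * solution_size + 1) + 1 = 2 * solution_size + 2" "1 + (c + 2) = c + 3"
    by simp_all
  ultimately show ?thesis by metis
qed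

lemma tdepth_RM_formula: "tdepth (RM_formula M) \<le> 9"
proof -
  have dnf_depth: "tdepth (dnf P Q) \<le> 5" for P Q
    using tdepth_dnf[of P Q] by simp
  have "tdepth (budget_formula M n xs Sp) \<le> Suc 4" for n xs Sp
    unfolding budget_formula_def cost_formula_def
    by (rule tdepth_TThr_le) (auto intro: le_trans[OF tdepth_dnf])
  then have "tdepth (candidate_formula M n xs Sp) \<le> Suc 5" for n xs Sp
    unfolding candidate_formula_def core_formula_def repairable_formula_def
    by (intro tdepth_TAnd_le) (auto simp: dnf_depth)
  then have "tdepth (solution_formula M n) \<le> Suc 6" for n
    unfolding solution_formula_def by (intro tdepth_TOr_le) auto
  moreover have "tdepth (header_formula n) \<le> Suc 6" for n
    unfolding header_formula_def by (intro tdepth_TAnd_le) auto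
  ultimately have "tdepth (TAnd [header_formula n, solution_formula M n]) \<le> Suc 7" for n
    by (intro tdepth_TAnd_le) auto
  then have "tdepth (RM_formula M) \<le> Suc 8"
    unfolding RM_formula_def by (intro tdepth_TOr_le) auto
  then show ?thesis by simp
qed

end

theorem lemma4p3:
  fixes m :: mode and ar :: "nat list" and c :: nat and psi :: qf
  assumes "qf_wf ar c psi"
  shows "TC0 (RM_lang m ar c psi)"
proof -
  interpret EA_sentence ar c psi m
    using assms by unfold_locales
  show ?thesis
    using teval_RM_formula tsize_RM_formula tdepth_RM_formula by (rule TC0_if_threshold_formulas)
qed

end
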